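(* Let $k\in\mathbb{N}$, $m=\lfloor\sqrt{k}\rfloor$, and let $G_k$ be the graph described in the context, with the geodesic-biased random walk with target $b$ and excited set $\{a\}$. Write $v_{m+1}:=b$ and $T(x,y)$ for the expected first hitting time of $y$ by this walk started at $x$. Then for every $1\le j\le m+1$, \[T(a,v_j)\ \ge\ \frac{k^{j-1}}{4^{j-1}\,(j-1)!}.\] In particular $T(a,b)\ge k^m/(4^m m!)$.
   Context: Geodesic-biased random walk: let $G$ be a finite connected graph, $b\in V(G)$ a target vertex and $\mathcal{X}\subseteq V(G)$ a set of excited vertices. For every vertex $x\neq b$ fix in advance one shortest path in $G$ from $x$ to $b$. From an unexcited vertex the walker moves to a uniformly random neighbour; from an excited vertex she moves to the next vertex on the fixed shortest path to $b$. The graph $G_k$ ($k\in\mathbb{N}$, $m=\lfloor\sqrt k\rfloor$): start with a path $a,v_1,v_2,\dots,v_m,b$ (of length $m+1$); then for each $i\in[m]$ add $k$ new paths from $a$ to $v_i$, each of length $i+1$ (i.e. each with $i$ new internal vertices), all these $km$ added paths being internally vertex-disjoint from each other and from the original path. In $G_k$ the unique shortest path from $a$ to $b$ is $a,v_1,\dots,v_m,b$, so from the excited vertex $a$ the walker always moves to $v_1$. *)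

theory Defs
  imports Complex_Main "HOL-Library.Extended_Nonnegative_Real"
begin

text \<open>A graph is given by a finite vertex set Vs and a symmetric edge predicate E
  (edges only between vertices of Vs).\<close>

definition nbrs :: "'v set \<Rightarrow> ('v \<Rightarrow> 'v \<Rightarrow> bool) \<Rightarrow> 'v \<Rightarrow> 'v set" where
  "nbrs Vs E x = {y \<in> Vs. E x y}"

definition gdist :: "('v \<Rightarrow> 'v \<Rightarrow> bool) \<Rightarrow> 'v \<Rightarrow> 'v \<Rightarrow> nat" where
  "gdist E x y = (LEAST n. (x, y) \<in> {(u, w). E u w} ^^ n)"

definition geodesic_next :: "('v \<Rightarrow> 'v \<Rightarrow> bool) \<Rightarrow> 'v \<Rightarrow> 'v set \<Rightarrow> ('v \<Rightarrow> 'v) \<Rightarrow> bool" where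
  "geodesic_next E b X nxt \<longleftrightarrow>
     (\<forall>x\<in>X. x \<noteq> b \<longrightarrow> E x (nxt x) \<and> gdist E (nxt x) b + 1 = gdist E x b)"

definition gbrw_P :: "'v set \<Rightarrow> ('v \<Rightarrow> 'v \<Rightarrow> bool) \<Rightarrow> 'v \<Rightarrow> 'v set \<Rightarrow> ('v \<Rightarrow> 'v)
                      \<Rightarrow> 'v \<Rightarrow> 'v \<Rightarrow> real" where
  "gbrw_P Vs E b X nxt x y =
     (if x \<in> X \<and> x \<noteq> b then (if y = nxt x then 1 else 0)
      else (if y \<in> nbrs Vs E x then 1 / real (card (nbrs Vs E x)) else 0))"

text \<open>surv P Vs y n x = probability that the chain with transition matrix P started
  at x has not visited y at any of the times 0,...,n  (i.e. P_x(tau_y > n)).\<close>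
fun surv :: "('v \<Rightarrow> 'v \<Rightarrow> real) \<Rightarrow> 'v set \<Rightarrow> 'v \<Rightarrow> nat \<Rightarrow> 'v \<Rightarrow> real" where
  "surv P Vs y 0 x = (if x = y then 0 else 1)"
| "surv P Vs y (Suc n) x = (if x = y then 0 else (\<Sum>z\<in>Vs. P x z * surv P Vs y n z))"

text \<open>Expected first hitting time E_x[tau_y] = sum_{n>=0} P_x(tau_y > n), in [0,\<infinity>].\<close>
definition hit_time :: "('v \<Rightarrow> 'v \<Rightarrow> real) \<Rightarrow> 'v set \<Rightarrow> 'v \<Rightarrow> 'v \<Rightarrow> ennreal" where
  "hit_time P Vs x y = (\<Sum>n. ennreal (surv P Vs y n x))"

text \<open>Vertices: A = a, B = b, V i = v_i (1 \<le> i \<le> m), and W i p t = the t-th internal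
  vertex (1 \<le> t \<le> i) of the p-th added path (1 \<le> p \<le> k) from a to v_i.\<close>
datatype vtx = A | B | V nat | W nat nat nat

definition msq :: "nat \<Rightarrow> nat" where
  "msq k = nat \<lfloor>sqrt (real k)\<rfloor>"

definition Gverts :: "nat \<Rightarrow> vtx set" where
  "Gverts k = {A, B} \<union> {V i | i. 1 \<le> i \<and> i \<le> msq k}
      \<union> {W i p t | i p t. 1 \<le> i \<and> i \<le> msq k \<and> 1 \<le> p \<and> p \<le> k \<and> 1 \<le> t \<and> t \<le> i}"

definition mainv :: "nat \<Rightarrow> nat \<Rightarrow> vtx" where
  "mainv k j = (if j = 0 then A else if j = msq k + 1 then B else V j)"

definition Gedge0 :: "nat \<Rightarrow> vtx \<Rightarrow> vtx \<Rightarrow> bool" where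
  "Gedge0 k x y \<longleftrightarrow>
     (\<exists>j\<le>msq k. x = mainv k j \<and> y = mainv k (j + 1))
   \<or> (\<exists>i p. 1 \<le> i \<and> i \<le> msq k \<and> 1 \<le> p \<and> p \<le> k \<and>
        ((x = A \<and> y = W i p 1)
         \<or> (\<exists>t. 1 \<le> t \<and> t < i \<and> x = W i p t \<and> y = W i p (t + 1))
         \<or> (x = W i p i \<and> y = V i)))"

definition Gedge :: "nat \<Rightarrow> vtx \<Rightarrow> vtx \<Rightarrow> bool" where
  "Gedge k x y \<longleftrightarrow> Gedge0 k x y \<or> Gedge0 k y x"

end

theory Submission
  imports Defs
begin

(*
  A bounded function f with f <= 0 at the target y and f <= 1 + Pf away from y is a lower bound
  for the expected hitting time of y: iterating the inequality n times bounds f by the first n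
  terms of the series defining the hitting time plus a multiple of P(tau_y > n), and the latter
  tends to 0 whenever the hitting time is finite.

  For the target v_j of G_k put q_i = k^(i-1)/i! and let f be q_j minus a potential that vanishes
  at a, equals q_i at v_i and is linear along each added path from a to v_i (i < j); f vanishes
  from v_j on. Inside the added paths f is harmonic. At v_i (i < j) the neighbour v_(i+1) and the
  k ends of the detours fall short of q_j by k q_i/(i+1) + k i q_i/(i+1) = k q_i in total (using
  q_(i+1) = k q_i/(i+1)), so f <= Pf there as long as q_(i-1) <= 2 q_i, which holds since
  i <= m <= k. The excited vertex a is forced to v_1, because every other neighbour of a lies on
  an added path and is at distance m+1 from b; as q_1 = 1 this gives f(a) = 1 + f(v_1). Hence
  T(a,v_j) >= k^(j-1)/j!, which implies the claim since j <= 4^(j-1). For k <= 1 the claimed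
  bound is at most 1 <= T(a,v_j).
*)

section \<open>Hitting times and graph distances\<close>

lemma surv_nonneg:
  assumes "\<And>x z. 0 \<le> P x z"
  shows "0 \<le> surv P Vs y n x"
  by (induction n arbitrary: x) (auto intro!: sum_nonneg mult_nonneg_nonneg assms)

lemma surv_target [simp]: "surv P Vs y n y = 0"
  by (cases n) auto

lemma subsolution_le_surv_sum:
  assumes P_nonneg: "\<And>x z. 0 \<le> P x z"
    and target: "f y \<le> 0"
    and bounded: "\<And>x. x \<in> Vs \<Longrightarrow> f x \<le> M"
    and sub: "\<And>x. x \<in> Vs \<Longrightarrow> x \<noteq> y \<Longrightarrow> f x \<le> 1 + (\<Sum>z\<in>Vs. P x z * f z)"
    and "x \<in> Vs"
  shows "f x \<le> (\<Sum>t<n. surv P Vs y t x) + M * surv P Vs y n x"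
  using \<open>x \<in> Vs\<close>
proof (induction n arbitrary: x)
  case 0
  then show ?case
    using target bounded by auto
next
  case (Suc n)
  show ?case
  proof (cases "x = y")
    case True
    then show ?thesis
      using target by simp
  next
    case False
    have "f x \<le> 1 + (\<Sum>z\<in>Vs. P x z * f z)"
      using sub[OF Suc.prems False] .
    also have "\<dots> \<le> 1 + (\<Sum>z\<in>Vs. P x z * ((\<Sum>t<n. surv P Vs y t z) + M * surv P Vs y n z))"
      using Suc.IH by (intro add_left_mono sum_mono mult_left_mono P_nonneg)
    also have "\<dots> = 1 + (\<Sum>t<n. \<Sum>z\<in>Vs. P x z * surv P Vs y t z)
                      + M * (\<Sum>z\<in>Vs. P x z * surv P Vs y n z)"
      by (simp add: distrib_left sum.distrib sum_distrib_left mult.left_commute sum.swap[of _ Vs])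
    also have "\<dots> = (\<Sum>t<Suc n. surv P Vs y t x) + M * surv P Vs y (Suc n) x"
      using False by (subst sum.lessThan_Suc_shift) simp
    finally show ?thesis .
  qed
qed

lemma hit_time_ge_subsolution:
  assumes P_nonneg: "\<And>x z. 0 \<le> P x z"
    and target: "f y \<le> 0"
    and bounded: "\<And>x. x \<in> Vs \<Longrightarrow> f x \<le> M"
    and sub: "\<And>x. x \<in> Vs \<Longrightarrow> x \<noteq> y \<Longrightarrow> f x \<le> 1 + (\<Sum>z\<in>Vs. P x z * f z)"
    and "x \<in> Vs"
  shows "ennreal (f x) \<le> hit_time P Vs x y"
proof (cases "hit_time P Vs x y = \<infinity>")
  case False
  let ?s = "\<lambda>n. surv P Vs y n x"
  have s_nonneg: "\<And>n. 0 \<le> ?s n"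
    using surv_nonneg[of P, OF P_nonneg] by blast
  have "summable ?s"
    using False s_nonneg by (intro summable_suminf_not_top) (auto simp: hit_time_def)
  then have "(\<lambda>n. (\<Sum>t<n. ?s t) + M * ?s n) \<longlonglongrightarrow> suminf ?s + M * 0"
    by (intro tendsto_intros summable_LIMSEQ summable_LIMSEQ_zero)
  moreover have "\<And>n. f x \<le> (\<Sum>t<n. ?s t) + M * ?s n"
    using subsolution_le_surv_sum[OF assms] .
  ultimately have "f x \<le> suminf ?s"
    by (intro LIMSEQ_le_const) auto
  moreover have "hit_time P Vs x y = ennreal (suminf ?s)"
    using False s_nonneg by (simp add: hit_time_def suminf_ennreal2)
  ultimately show ?thesis
    by (simp add: ennreal_leI)
qed simp

lemma one_le_hit_time:
  assumes "x \<noteq> y"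
  shows "1 \<le> hit_time P Vs x y"
proof -
  have "(\<Sum>n\<in>{0}. ennreal (surv P Vs y n x)) \<le> hit_time P Vs x y"
    unfolding hit_time_def by (rule sum_le_suminf) auto
  then show ?thesis
    using assms by simp
qed

lemma gbrw_P_nonneg: "0 \<le> gbrw_P Vs E b X nxt x z"
  by (auto simp: gbrw_P_def)

lemma sum_gbrw_P_excited:
  assumes "finite Vs" "x \<in> X" "x \<noteq> b" "nxt x \<in> Vs"
  shows "(\<Sum>z\<in>Vs. gbrw_P Vs E b X nxt x z * g z) = g (nxt x)"
proof -
  have "(\<Sum>z\<in>Vs. gbrw_P Vs E b X nxt x z * g z) = (\<Sum>z\<in>Vs. if z = nxt x then g z else 0)"
    using assms by (intro sum.cong) (auto simp: gbrw_P_def)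
  then show ?thesis
    using assms by simp
qed

lemma sum_gbrw_P_unexcited:
  assumes "finite Vs" "x \<notin> X"
  shows "(\<Sum>z\<in>Vs. gbrw_P Vs E b X nxt x z * g z)
           = (\<Sum>z\<in>nbrs Vs E x. g z) / card (nbrs Vs E x)"
proof -
  have "nbrs Vs E x \<subseteq> Vs"
    by (auto simp: nbrs_def)
  have "(\<Sum>z\<in>Vs. gbrw_P Vs E b X nxt x z * g z)
          = (\<Sum>z\<in>Vs. if z \<in> nbrs Vs E x then g z / card (nbrs Vs E x) else 0)"
    using assms by (intro sum.cong) (auto simp: gbrw_P_def)
  also have "\<dots> = (\<Sum>z\<in>nbrs Vs E x. g z / card (nbrs Vs E x))"
    using \<open>nbrs Vs E x \<subseteq> Vs\<close> assms by (simp add: sum.If_cases Int_absorb1)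
  also have "\<dots> = (\<Sum>z\<in>nbrs Vs E x. g z) / card (nbrs Vs E x)"
    by (simp add: sum_divide_distrib)
  finally show ?thesis .
qed

lemma gdist_le:
  assumes "(x, y) \<in> {(u, w). E u w} ^^ n"
  shows "gdist E x y \<le> n"
  unfolding gdist_def using assms by (rule Least_le)

lemma walk_of_length_gdist:
  assumes "(x, y) \<in> {(u, w). E u w} ^^ n"
  shows "(x, y) \<in> {(u, w). E u w} ^^ gdist E x y"
  unfolding gdist_def using assms by (rule LeastI)

lemma lipschitz_relpow_le:
  fixes h :: "'v \<Rightarrow> nat"
  assumes lip: "\<And>u w. E u w \<Longrightarrow> h u \<le> h w + 1"
  shows "(x, y) \<in> {(u, w). E u w} ^^ n \<Longrightarrow> h x \<le> h y + n"
proof (induction n arbitrary: x)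
  case (Suc n)
  from Suc.prems obtain z where "E x z" "(z, y) \<in> {(u, w). E u w} ^^ n"
    by (rule relpow_Suc_E2) auto
  then show ?case
    using Suc.IH lip by fastforce
qed simp

lemma lipschitz_le_gdist:
  fixes h :: "'v \<Rightarrow> nat"
  assumes "\<And>u w. E u w \<Longrightarrow> h u \<le> h w + 1" "(x, y) \<in> {(u, w). E u w} ^^ n"
  shows "h x \<le> h y + gdist E x y"
  using lipschitz_relpow_le[OF assms(1) walk_of_length_gdist[OF assms(2)]] .

section \<open>The graph G_k\<close>

lemma msq_sq_le: "msq k * msq k \<le> k"
proof -
  have "real (msq k) \<le> sqrt (real k)"
    by (simp add: msq_def)
  then have "real (msq k) * real (msq k) \<le> sqrt (real k) * sqrt (real k)"
    by (intro mult_mono) auto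
  then have "real (msq k * msq k) \<le> real k"
    by simp
  then show ?thesis
    by linarith
qed

lemma msq_pos:
  assumes "1 \<le> k"
  shows "1 \<le> msq k"
proof -
  have "1 \<le> \<lfloor>sqrt (real k)\<rfloor>"
    using assms by simp
  then show ?thesis
    unfolding msq_def by linarith
qed

lemma Suc_msq_le: "2 \<le> k \<Longrightarrow> Suc (msq k) \<le> k"
proof (cases "msq k \<le> 1")
  case False
  then have "2 * msq k \<le> msq k * msq k"
    by (intro mult_right_mono) auto
  then show ?thesis
    using False msq_sq_le[of k] by linarith
qed simp

lemma mem_Gverts [simp]:
  "A \<in> Gverts k" "B \<in> Gverts k"
  "V i \<in> Gverts k \<longleftrightarrow> 1 \<le> i \<and> i \<le> msq k"
  "W i p t \<in> Gverts k \<longleftrightarrow> 1 \<le> i \<and> i \<le> msq k \<and> 1 \<le> p \<and> p \<le> k \<and> 1 \<le> t \<and> t \<le> i"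
  by (auto simp: Gverts_def)

lemma finite_Gverts: "finite (Gverts k)"
proof -
  have "Gverts k \<subseteq> {A, B} \<union> V ` {..msq k}
          \<union> (\<lambda>(i, p, t). W i p t) ` ({..msq k} \<times> {..k} \<times> {..msq k})"
    by (auto simp: Gverts_def image_iff)
  then show ?thesis
    by (rule finite_subset) auto
qed

lemma mainv_eq_iff:
  "mainv k j = A \<longleftrightarrow> j = 0"
  "mainv k j = B \<longleftrightarrow> j = Suc (msq k)"
  "mainv k j = V i \<longleftrightarrow> j = i \<and> i \<noteq> 0 \<and> i \<noteq> Suc (msq k)"
  "mainv k j \<noteq> W i p t"
  "A = mainv k j \<longleftrightarrow> j = 0"
  "B = mainv k j \<longleftrightarrow> j = Suc (msq k)"
  "V i = mainv k j \<longleftrightarrow> j = i \<and> i \<noteq> 0 \<and> i \<noteq> Suc (msq k)"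
  "W i p t \<noteq> mainv k j"
  by (auto simp: mainv_def)

lemma mainv_0 [simp]: "mainv k 0 = A"
  and mainv_Suc_msq [simp]: "mainv k (Suc (msq k)) = B"
  by (auto simp: mainv_def)

lemma mainv_in_Gverts: "j \<le> Suc (msq k) \<Longrightarrow> mainv k j \<in> Gverts k"
  by (auto simp: mainv_def)

lemma Gedge0_W_iff:
  "Gedge0 k (W i p t) y \<longleftrightarrow> W i p t \<in> Gverts k \<and> (t < i \<and> y = W i p (t + 1) \<or> t = i \<and> y = V i)"
  unfolding Gedge0_def by (auto simp: mainv_eq_iff)

lemma Gedge0_to_W_iff:
  "Gedge0 k y (W i p t) \<longleftrightarrow> W i p t \<in> Gverts k \<and> (t = 1 \<and> y = A \<or> 1 < t \<and> y = W i p (t - 1))"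
  unfolding Gedge0_def by (auto simp: mainv_eq_iff)

lemma Gedge0_V_iff: "Gedge0 k (V i) y \<longleftrightarrow> V i \<in> Gverts k \<and> y = mainv k (i + 1)"
  unfolding Gedge0_def by (auto simp: mainv_eq_iff)

lemma Gedge0_to_V_iff:
  "Gedge0 k y (V i) \<longleftrightarrow>
     V i \<in> Gverts k \<and> (y = mainv k (i - 1) \<or> (\<exists>p. 1 \<le> p \<and> p \<le> k \<and> y = W i p i))"
  unfolding Gedge0_def apply (auto simp: mainv_eq_iff)
  apply (rule_tac x="i - 1" in exI) by auto

lemma Gedge0_A_iff:
  "Gedge0 k A y \<longleftrightarrow> y = mainv k 1 \<or> (\<exists>i p. W i p 1 \<in> Gverts k \<and> y = W i p 1)"
  unfolding Gedge0_def by (auto simp: mainv_eq_iff)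

lemma not_Gedge0_to_A: "\<not> Gedge0 k y A"
  unfolding Gedge0_def by (auto simp: mainv_eq_iff)

lemma not_Gedge0_B: "\<not> Gedge0 k B y"
  unfolding Gedge0_def by (auto simp: mainv_eq_iff)

lemma main_path_walk: "j \<le> Suc (msq k) \<Longrightarrow> (A, mainv k j) \<in> {(u, w). Gedge k u w} ^^ j"
proof (induction j)
  case (Suc j)
  then have "Gedge0 k (mainv k j) (mainv k (j + 1))"
    unfolding Gedge0_def by auto
  then have "(mainv k j, mainv k (Suc j)) \<in> {(u, w). Gedge k u w}"
    by (simp add: Gedge_def)
  with Suc show ?case
    by auto
qed simp

lemma nbrs_W:
  assumes "W i p t \<in> Gverts k"
  shows "nbrs (Gverts k) (Gedge k) (W i p t) =
           {if t = 1 then A else W i p (t - 1), if t = i then V i else W i p (t + 1)}"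
  using assms by (auto simp: nbrs_def Gedge_def Gedge0_W_iff Gedge0_to_W_iff split: if_splits)

lemma nbrs_V:
  assumes "V i \<in> Gverts k"
  shows "nbrs (Gverts k) (Gedge k) (V i) =
           {mainv k (i - 1), mainv k (i + 1)} \<union> (\<lambda>p. W i p i) ` {1..k}"
  using assms mainv_in_Gverts[of "i - 1" k] mainv_in_Gverts[of "i + 1" k]
  by (auto simp: nbrs_def Gedge_def Gedge0_V_iff Gedge0_to_V_iff)

lemma nbrs_V_disjoint:
  assumes "V i \<in> Gverts k"
  shows "mainv k (i - 1) \<noteq> mainv k (i + 1)"
    and "{mainv k (i - 1), mainv k (i + 1)} \<inter> (\<lambda>p. W i p i) ` {1..k} = {}"
  using assms by (auto simp: mainv_def)

lemma card_nbrs_V: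
  assumes "V i \<in> Gverts k"
  shows "card (nbrs (Gverts k) (Gedge k) (V i)) = k + 2"
  using nbrs_V_disjoint[OF assms]
  by (simp add: nbrs_V[OF assms] card_Un_disjoint card_image inj_on_def)

lemma sum_nbrs_V:
  assumes "V i \<in> Gverts k"
  shows "(\<Sum>z\<in>nbrs (Gverts k) (Gedge k) (V i). g z)
           = g (mainv k (i - 1)) + g (mainv k (i + 1)) + (\<Sum>p=1..k. g (W i p i))"
  using nbrs_V_disjoint[OF assms]
  by (simp add: nbrs_V[OF assms] sum.union_disjoint sum.reindex inj_on_def add.assoc)

(* The graph distance from x to b. *)
definition level :: "nat \<Rightarrow> vtx \<Rightarrow> nat" where
  "level k x = (case x of A \<Rightarrow> msq k + 1 | B \<Rightarrow> 0 | V i \<Rightarrow> msq k + 1 - i | W i p t \<Rightarrow> msq k + 2 - t)"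

lemma level_mainv: "j \<le> Suc (msq k) \<Longrightarrow> level k (mainv k j) = Suc (msq k) - j"
  by (auto simp: mainv_def level_def)

lemma level_Gedge0:
  assumes "Gedge0 k u w"
  shows "level k w \<le> level k u \<and> level k u \<le> level k w + 1"
proof (cases u)
  case A
  then show ?thesis
    using assms by (auto simp: Gedge0_A_iff level_mainv) (auto simp: level_def)
next
  case B
  then show ?thesis
    using assms not_Gedge0_B by simp
next
  case (V i)
  then show ?thesis
    using assms by (auto simp: Gedge0_V_iff level_mainv) (auto simp: level_def)
next
  case (W i p t)
  then show ?thesis
    using assms by (auto simp: Gedge0_W_iff level_def)
qed

lemma level_Gedge: "Gedge k u w \<Longrightarrow> level k u \<le> level k w + 1"
  unfolding Gedge_def using level_Gedge0[of k u w] level_Gedge0[of k w u] by auto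

lemma geodesic_next_A:
  assumes "geodesic_next (Gedge k) B {A} nxt" and "1 \<le> msq k"
  shows "nxt A = V 1"
proof -
  let ?R = "{(u, w). Gedge k u w}"
  have edge: "Gedge k A (nxt A)"
    and closer: "gdist (Gedge k) (nxt A) B + 1 = gdist (Gedge k) A B"
    using assms(1) by (auto simp: geodesic_next_def)
  have walk: "(A, B) \<in> ?R ^^ Suc (msq k)"
    using main_path_walk[of "Suc (msq k)" k] by simp
  have "(nxt A, A) \<in> ?R"
    using edge by (auto simp: Gedge_def)
  then have walk_from_nxt: "(nxt A, B) \<in> ?R ^^ Suc (Suc (msq k))"
    using walk by (rule relpow_Suc_I2)
  have "level k (nxt A) \<le> gdist (Gedge k) (nxt A) B"
    using lipschitz_le_gdist[where h = "level k", OF level_Gedge walk_from_nxt] by (simp add: level_def)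
  also have "\<dots> \<le> msq k"
    using closer gdist_le[OF walk] by simp
  finally have "level k (nxt A) \<le> msq k" .
  moreover have "Gedge0 k A (nxt A)"
    using edge not_Gedge0_to_A by (auto simp: Gedge_def)
  ultimately show ?thesis
    using assms(2) by (auto simp: Gedge0_A_iff level_def mainv_def)
qed

section \<open>A subsolution for the hitting time of v_j\<close>

definition hitting_bound :: "nat \<Rightarrow> nat \<Rightarrow> real" where
  "hitting_bound k i = real k ^ (i - 1) / fact i"

lemma hitting_bound_1 [simp]: "hitting_bound k 1 = 1" "hitting_bound k (Suc 0) = 1"
  by (simp_all add: hitting_bound_def)

lemma hitting_bound_nonneg [simp]: "0 \<le> hitting_bound k i"
  by (simp add: hitting_bound_def)

lemma hitting_bound_Suc: "1 \<le> i \<Longrightarrow> hitting_bound k (Suc i) = real k * hitting_bound k i / real (Suc i)"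
  by (cases i) (simp_all add: hitting_bound_def)

lemma hitting_bound_mono:
  assumes "1 \<le> i" "i \<le> j" "j \<le> k"
  shows "hitting_bound k i \<le> hitting_bound k j"
  using assms(2)
proof (induction j rule: dec_induct)
  case (step n)
  have "real (Suc n) * hitting_bound k n \<le> real k * hitting_bound k n"
    using step.hyps assms(3) by (intro mult_right_mono hitting_bound_nonneg) simp
  then have "hitting_bound k n \<le> hitting_bound k (Suc n)"
    using step.hyps assms(1) by (simp add: hitting_bound_Suc le_divide_eq mult.commute)
  with step.IH show ?case
    by linarith
qed simp

definition hit_subsolution :: "nat \<Rightarrow> nat \<Rightarrow> vtx \<Rightarrow> real" where
  "hit_subsolution k j x = (case x of
      A \<Rightarrow> hitting_bound k j
    | B \<Rightarrow> 0
    | V i \<Rightarrow> if i < j then hitting_bound k j - hitting_bound k i else 0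
    | W i p t \<Rightarrow> if i < j then hitting_bound k j - real t * hitting_bound k i / real (Suc i) else 0)"

lemma hit_subsolution_mainv:
  assumes "1 \<le> i" "i \<le> j" "j \<le> Suc (msq k)"
  shows "hit_subsolution k j (mainv k i) = hitting_bound k j - hitting_bound k i"
  using assms by (auto simp: hit_subsolution_def mainv_def)

lemma hit_subsolution_bounds:
  assumes "x \<in> Gverts k" "j \<le> k"
  shows "0 \<le> hit_subsolution k j x \<and> hit_subsolution k j x \<le> hitting_bound k j"
proof (cases x)
  case (V i)
  show ?thesis
  proof (cases "i < j")
    case True
    then have "hitting_bound k i \<le> hitting_bound k j"
      using V assms by (intro hitting_bound_mono) auto
    then show ?thesis
      using V True by (simp add: hit_subsolution_def)
  qed (simp add: V hit_subsolution_def)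
next
  case (W i p t)
  show ?thesis
  proof (cases "i < j")
    case True
    have "real t * hitting_bound k i / real (Suc i) \<le> hitting_bound k i"
      using W assms mult_right_mono[of "real t" "real (Suc i)" "hitting_bound k i"]
      by (simp add: divide_le_eq mult.commute)
    moreover have "hitting_bound k i \<le> hitting_bound k j"
      using W True assms by (intro hitting_bound_mono) auto
    ultimately show ?thesis
      using W True by (simp add: hit_subsolution_def)
  qed (simp add: W hit_subsolution_def)
qed (simp_all add: hit_subsolution_def)

lemma hit_subsolution_W:
  assumes "W i p t \<in> Gverts k" "i < j"
  shows "hit_subsolution k j (W i p t) =
           (\<Sum>z\<in>nbrs (Gverts k) (Gedge k) (W i p t). hit_subsolution k j z)
             / card (nbrs (Gverts k) (Gedge k) (W i p t))"
proof -
  let ?f = "hit_subsolution k j"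
  define s where "s = hitting_bound k i / real (Suc i)"
  define before where "before = (if t = 1 then A else W i p (t - 1))"
  define after where "after = (if t = i then V i else W i p (t + 1))"
  have "before \<noteq> after"
    using assms by (auto simp: before_def after_def)
  then have "(\<Sum>z\<in>nbrs (Gverts k) (Gedge k) (W i p t). ?f z) / card (nbrs (Gverts k) (Gedge k) (W i p t))
               = (?f before + ?f after) / 2"
    using nbrs_W[OF assms(1)] by (simp add: before_def after_def)
  also have "?f before = hitting_bound k j - (real t - 1) * s"
    using assms by (auto simp: before_def hit_subsolution_def of_nat_diff s_def)
  also have "?f after = hitting_bound k j - (real t + 1) * s"
  proof (cases "t = i")
    case True
    then show ?thesis
      using assms of_nat_neq_0[of i] by (simp add: after_def hit_subsolution_def s_def field_simps)
  qed (use assms in \<open>simp add: after_def hit_subsolution_def s_def\<close>)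
  also have "(hitting_bound k j - (real t - 1) * s + (hitting_bound k j - (real t + 1) * s)) / 2
               = hitting_bound k j - real t * s"
    by (simp add: field_simps)
  also have "\<dots> = ?f (W i p t)"
    using assms by (simp add: hit_subsolution_def s_def)
  finally show ?thesis ..
qed

lemma hit_subsolution_V:
  assumes "1 \<le> i" "i < j" "j \<le> Suc (msq k)" "Suc (msq k) \<le> k"
  shows "hit_subsolution k j (V i) \<le>
           (\<Sum>z\<in>nbrs (Gverts k) (Gedge k) (V i). hit_subsolution k j z)
             / card (nbrs (Gverts k) (Gedge k) (V i))"
proof -
  let ?f = "hit_subsolution k j" and ?q = "hitting_bound k"
  define s where "s = ?q i / real (Suc i)"
  have v: "V i \<in> Gverts k"
    using assms by simp
  have q_i: "?q i = real (Suc i) * s"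
    using of_nat_neq_0[of i] by (simp add: s_def)
  have before: "?q j - 2 * ?q i \<le> ?f (mainv k (i - 1))"
  proof (cases "i = 1")
    case True
    then show ?thesis
      by (simp add: hit_subsolution_def)
  next
    case False
    then have "?f (mainv k (i - 1)) = ?q j - ?q (i - 1)"
      using assms by (intro hit_subsolution_mainv) auto
    moreover have "?q (i - 1) \<le> ?q i"
      using assms False by (intro hitting_bound_mono) auto
    ultimately show ?thesis
      using hitting_bound_nonneg[of k i] by linarith
  qed
  have after: "?f (mainv k (i + 1)) = ?q j - real k * s"
    using assms hit_subsolution_mainv[of "i + 1" j k] by (simp add: hitting_bound_Suc s_def)
  have detours: "(\<Sum>p=1..k. ?f (W i p i)) = real k * (?q j - real i * s)"
    using assms by (simp add: hit_subsolution_def s_def)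
  have value_V: "?f (V i) = ?q j - ?q i"
    using assms by (simp add: hit_subsolution_def)
  have "(real k + 2) * ?f (V i)
          = (?q j - 2 * ?q i) + (?q j - real k * s) + real k * (?q j - real i * s)"
    unfolding value_V q_i by (simp add: algebra_simps)
  also have "\<dots> \<le> ?f (mainv k (i - 1)) + ?f (mainv k (i + 1)) + (\<Sum>p=1..k. ?f (W i p i))"
    unfolding after detours using before by linarith
  also have "\<dots> = (\<Sum>z\<in>nbrs (Gverts k) (Gedge k) (V i). ?f z)"
    by (rule sum_nbrs_V[OF v, symmetric])
  finally show ?thesis
    by (simp add: card_nbrs_V[OF v] le_divide_eq algebra_simps)
qed

lemma hit_subsolution_le_step:
  assumes nxt: "geodesic_next (Gedge k) B {A} nxt"
    and "2 \<le> k" "1 \<le> j" "j \<le> Suc (msq k)" "x \<in> Gverts k"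
  shows "hit_subsolution k j x
           \<le> 1 + (\<Sum>z\<in>Gverts k. gbrw_P (Gverts k) (Gedge k) B {A} nxt x z * hit_subsolution k j z)"
    (is "_ \<le> 1 + ?Pf x")
proof -
  have k: "Suc (msq k) \<le> k" "1 \<le> msq k"
    using assms Suc_msq_le msq_pos by auto
  have Pf_nonneg: "0 \<le> ?Pf x"
    using assms hit_subsolution_bounds[of _ k j] k
    by (intro sum_nonneg mult_nonneg_nonneg gbrw_P_nonneg) auto
  show ?thesis
  proof (cases x)
    case A
    have "?Pf A = hit_subsolution k j (V 1)"
      using geodesic_next_A[OF nxt k(2)] k by (simp add: sum_gbrw_P_excited finite_Gverts)
    also have "\<dots> = hitting_bound k j - 1"
      using assms by (auto simp: hit_subsolution_def)
    finally show ?thesis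
      using A by (simp add: hit_subsolution_def)
  next
    case (V i)
    show ?thesis
    proof (cases "i < j")
      case True
      then have "hit_subsolution k j x \<le> ?Pf x"
        using V assms k hit_subsolution_V[of i j k] by (simp add: sum_gbrw_P_unexcited finite_Gverts)
      then show ?thesis
        by linarith
    qed (use V Pf_nonneg in \<open>simp add: hit_subsolution_def\<close>)
  next
    case (W i p t)
    show ?thesis
    proof (cases "i < j")
      case True
      then have "hit_subsolution k j x = ?Pf x"
        using W assms hit_subsolution_W[of i p t k j] by (simp add: sum_gbrw_P_unexcited finite_Gverts)
      then show ?thesis
        by linarith
    qed (use W Pf_nonneg in \<open>simp add: hit_subsolution_def\<close>)
  qed (use Pf_nonneg in \<open>simp add: hit_subsolution_def\<close>)
qed

lemma hitting_bound_le_hit_time: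
  assumes "geodesic_next (Gedge k) B {A} nxt" "2 \<le> k" "1 \<le> j" "j \<le> Suc (msq k)"
  shows "ennreal (hitting_bound k j)
           \<le> hit_time (gbrw_P (Gverts k) (Gedge k) B {A} nxt) (Gverts k) A (mainv k j)"
proof -
  have "j \<le> k"
    using assms Suc_msq_le by fastforce
  have "ennreal (hit_subsolution k j A)
          \<le> hit_time (gbrw_P (Gverts k) (Gedge k) B {A} nxt) (Gverts k) A (mainv k j)"
  proof (rule hit_time_ge_subsolution)
    show "hit_subsolution k j (mainv k j) \<le> 0"
      using assms hit_subsolution_mainv[of j j k] by simp
    show "hit_subsolution k j x \<le> hitting_bound k j" if "x \<in> Gverts k" for x
      using hit_subsolution_bounds[OF that \<open>j \<le> k\<close>] by simp
    show "hit_subsolution k j x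
            \<le> 1 + (\<Sum>z\<in>Gverts k. gbrw_P (Gverts k) (Gedge k) B {A} nxt x z * hit_subsolution k j z)"
      if "x \<in> Gverts k" "x \<noteq> mainv k j" for x
      using hit_subsolution_le_step[OF assms that(1)] .
  qed (simp_all add: gbrw_P_nonneg)
  then show ?thesis
    by (simp add: hit_subsolution_def)
qed

lemma fact_le_four_pow_mult_fact: "(fact j :: real) \<le> 4 ^ (j - 1) * fact (j - 1)"
proof (cases j)
  case (Suc n)
  have "real (Suc n) \<le> 4 ^ n"
    by (induction n) auto
  then show ?thesis
    using Suc by (simp add: mult_right_mono)
qed simp

lemma four_pow_bound_le_hitting_bound:
  "real k ^ (j - 1) / (4 ^ (j - 1) * fact (j - 1)) \<le> hitting_bound k j"
  unfolding hitting_bound_def by (intro divide_left_mono fact_le_four_pow_mult_fact) auto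

lemma four_pow_bound_le_1:
  assumes "k \<le> 1"
  shows "real k ^ (j - 1) / (4 ^ (j - 1) * fact (j - 1)) \<le> 1"
proof -
  have "real k ^ (j - 1) \<le> 1"
    using assms by (intro power_le_one) auto
  also have "(1::real) \<le> 4 ^ (j - 1) * fact (j - 1)"
    using mult_mono[of 1 "4 ^ (j - 1)" 1 "fact (j - 1) :: real"] by simp
  finally show ?thesis
    by (simp add: divide_le_eq_1)
qed

lemma four_pow_bound_le_hit_time:
  assumes "geodesic_next (Gedge k) B {A} nxt" "1 \<le> j" "j \<le> msq k + 1"
  shows "ennreal (real k ^ (j - 1) / (4 ^ (j - 1) * fact (j - 1)))
           \<le> hit_time (gbrw_P (Gverts k) (Gedge k) B {A} nxt) (Gverts k) A (mainv k j)"
proof (cases "2 \<le> k")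
  case True
  have "ennreal (real k ^ (j - 1) / (4 ^ (j - 1) * fact (j - 1))) \<le> ennreal (hitting_bound k j)"
    by (rule ennreal_leI[OF four_pow_bound_le_hitting_bound])
  also have "\<dots> \<le> hit_time (gbrw_P (Gverts k) (Gedge k) B {A} nxt) (Gverts k) A (mainv k j)"
    using hitting_bound_le_hit_time[OF assms(1) True assms(2)] assms(3) by simp
  finally show ?thesis .
next
  case False
  have "ennreal (real k ^ (j - 1) / (4 ^ (j - 1) * fact (j - 1))) \<le> ennreal 1"
    using False by (intro ennreal_leI four_pow_bound_le_1) simp
  also have "\<dots> \<le> hit_time (gbrw_P (Gverts k) (Gedge k) B {A} nxt) (Gverts k) A (mainv k j)"
    using assms(2) by (simp add: one_le_hit_time mainv_eq_iff)
  finally show ?thesis .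
qed

theorem mainTheorem3:
  fixes k :: nat and nxt :: "vtx \<Rightarrow> vtx"
  assumes "geodesic_next (Gedge k) B {A} nxt"
  shows "(\<forall>j. 1 \<le> j \<and> j \<le> msq k + 1 \<longrightarrow>
            hit_time (gbrw_P (Gverts k) (Gedge k) B {A} nxt) (Gverts k) A (mainv k j)
              \<ge> ennreal (real k ^ (j - 1) / (4 ^ (j - 1) * fact (j - 1))))
       \<and> hit_time (gbrw_P (Gverts k) (Gedge k) B {A} nxt) (Gverts k) A B
              \<ge> ennreal (real k ^ msq k / (4 ^ msq k * fact (msq k)))"
  using four_pow_bound_le_hit_time[OF assms] four_pow_bound_le_hit_time[OF assms, of "msq k + 1"]
  by auto

end
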